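(* Let $L\geq 2$ and let $\mathcal{Z}(\lambda_1,\dots,\lambda_L)=\langle\bar 0|\mathcal{B}(\lambda_1)\cdots\mathcal{B}(\lambda_L)|0\rangle$ be the partition function of the six-vertex model with one reflecting end and domain-wall boundaries (see context). Then $\mathcal{Z}$ vanishes whenever $\lambda_1=\mu_1-\gamma$ and $\lambda_2=\mu_1$ (with $\lambda_3,\dots,\lambda_L$ arbitrary). The same holds when $\lambda_1=\mu_1-\gamma$ and $\lambda_2=-\mu_1-\gamma$.
   Context: Parameters $\gamma,h,\mu_1,\dots,\mu_L\in\mathbb{C}$. Set $a(\lambda)=\sinh(\lambda+\gamma)$, $b(\lambda)=\sinh(\lambda)$, $c(\lambda)=\sinh(\gamma)$. The $R$-matrix $\mathcal{R}(\lambda)\in\mathrm{End}(\mathbb{C}^2\otimes\mathbb{C}^2)$ is, in the basis $e_1\otimes e_1,e_1\otimes e_2,e_2\otimes e_1,e_2\otimes e_2$, the matrix with rows $(a,0,0,0)$, $(0,b,c,0)$, $(0,c,b,0)$, $(0,0,0,a)$ evaluated at $\lambda$. Let $\mathbb{V}_0\cong\mathbb{C}^2$ and $\mathbb{V}_{\mathcal{Q}}=(\mathbb{C}^2)^{\otimes L}$; $\mathcal{R}_{0j}$ acts on $\mathbb{V}_0$ and the $j$-th factor of $\mathbb{V}_{\mathcal{Q}}$. Define $\tau(\lambda)=\mathcal{R}_{0L}(\lambda-\mu_L)\cdots\mathcal{R}_{01}(\lambda-\mu_1)$, $\bar\tau(\lambda)=\mathcal{R}_{01}(\lambda+\mu_1)\cdots\mathcal{R}_{0L}(\lambda+\mu_L)$,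 $\mathcal{K}(\lambda)=\mathrm{diag}(\sinh(h+\lambda),\sinh(h-\lambda))$ on $\mathbb{V}_0$, and $\mathcal{T}(\lambda)=\tau(\lambda)\mathcal{K}(\lambda)\bar\tau(\lambda)=\begin{pmatrix}\mathcal{A}(\lambda)&\mathcal{B}(\lambda)\\ \mathcal{C}(\lambda)&\mathcal{D}(\lambda)\end{pmatrix}$ in $\mathbb{V}_0$, with entries in $\mathrm{End}(\mathbb{V}_{\mathcal{Q}})$. Let $|0\rangle=e_1^{\otimes L}$ and $\langle\bar 0|$ the transpose of $e_2^{\otimes L}$, $e_1=(1,0)^T$, $e_2=(0,1)^T$. *)

theory Defs
  imports Complex_Main
begin

text \<open>Basis of C^2: False = e1, True = e2. Basis states of (C^2)^{\<otimes>L}: bool lists of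
length L (entry k corresponds to tensor factor k+1). Operators are given by their
matrix entries.\<close>

definition states :: "nat \<Rightarrow> bool list set" where
  "states L = {s. length s = L}"

type_synonym opQ = "bool list \<Rightarrow> bool list \<Rightarrow> complex"
type_synonym op0Q = "bool \<times> bool list \<Rightarrow> bool \<times> bool list \<Rightarrow> complex"

definition opQ_mult :: "nat \<Rightarrow> opQ \<Rightarrow> opQ \<Rightarrow> opQ" where
  "opQ_mult L M N = (\<lambda>s t. \<Sum>r\<in>states L. M s r * N r t)"

definition op0Q_mult :: "nat \<Rightarrow> op0Q \<Rightarrow> op0Q \<Rightarrow> op0Q" where
  "op0Q_mult L M N = (\<lambda>p q. \<Sum>r\<in>(UNIV::bool set) \<times> states L. M p r * N r q)"

definition op_id :: "'a \<Rightarrow> 'a \<Rightarrow> complex" where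
  "op_id p q = (if p = q then 1 else 0)"

text \<open>The R-matrix entry <a,x| R(lam) |b,y> with basis order e1e1, e1e2, e2e1, e2e2.\<close>
definition Rmat :: "complex \<Rightarrow> complex \<Rightarrow> bool \<times> bool \<Rightarrow> bool \<times> bool \<Rightarrow> complex" where
  "Rmat \<gamma> lam p q =
     (if p = q then (if fst p = snd p then sinh (lam + \<gamma>) else sinh lam)
      else if fst p \<noteq> snd p \<and> q = (snd p, fst p) then sinh \<gamma>
      else 0)"

text \<open>R_{0j}(lam) acting on V_0 and the j-th factor (1 \<le> j \<le> L) of V_Q.\<close>
definition R0j :: "complex \<Rightarrow> nat \<Rightarrow> nat \<Rightarrow> complex \<Rightarrow> op0Q" where
  "R0j \<gamma> L j lam = (\<lambda>(a, s) (b, t).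
      Rmat \<gamma> lam (a, s ! (j - 1)) (b, t ! (j - 1)) *
      (if \<forall>k<L. k \<noteq> j - 1 \<longrightarrow> s ! k = t ! k then 1 else 0))"

primrec tau_upto :: "complex \<Rightarrow> (nat \<Rightarrow> complex) \<Rightarrow> nat \<Rightarrow> complex \<Rightarrow> nat \<Rightarrow> op0Q" where
  "tau_upto \<gamma> \<mu> L lam 0 = op_id"
| "tau_upto \<gamma> \<mu> L lam (Suc n) =
     op0Q_mult L (R0j \<gamma> L (Suc n) (lam - \<mu> (Suc n))) (tau_upto \<gamma> \<mu> L lam n)"

primrec taubar_upto :: "complex \<Rightarrow> (nat \<Rightarrow> complex) \<Rightarrow> nat \<Rightarrow> complex \<Rightarrow> nat \<Rightarrow> op0Q" where
  "taubar_upto \<gamma> \<mu> L lam 0 = op_id"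
| "taubar_upto \<gamma> \<mu> L lam (Suc n) =
     op0Q_mult L (taubar_upto \<gamma> \<mu> L lam n) (R0j \<gamma> L (Suc n) (lam + \<mu> (Suc n)))"

definition Kop :: "complex \<Rightarrow> complex \<Rightarrow> op0Q" where
  "Kop h lam = (\<lambda>(a, s) (b, t).
     if a = b \<and> s = t then (if a then sinh (h - lam) else sinh (h + lam)) else 0)"

definition Tmon :: "complex \<Rightarrow> complex \<Rightarrow> (nat \<Rightarrow> complex) \<Rightarrow> nat \<Rightarrow> complex \<Rightarrow> op0Q" where
  "Tmon \<gamma> h \<mu> L lam =
     op0Q_mult L (op0Q_mult L (tau_upto \<gamma> \<mu> L lam L) (Kop h lam)) (taubar_upto \<gamma> \<mu> L lam L)"

definition Bop :: "complex \<Rightarrow> complex \<Rightarrow> (nat \<Rightarrow> complex) \<Rightarrow> nat \<Rightarrow> complex \<Rightarrow> opQ" where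
  "Bop \<gamma> h \<mu> L lam = (\<lambda>s t. Tmon \<gamma> h \<mu> L lam (False, s) (True, t))"

primrec Bprod :: "complex \<Rightarrow> complex \<Rightarrow> (nat \<Rightarrow> complex) \<Rightarrow> nat \<Rightarrow> (nat \<Rightarrow> complex) \<Rightarrow> nat \<Rightarrow> opQ" where
  "Bprod \<gamma> h \<mu> L lam 0 = op_id"
| "Bprod \<gamma> h \<mu> L lam (Suc n) = opQ_mult L (Bprod \<gamma> h \<mu> L lam n) (Bop \<gamma> h \<mu> L (lam (Suc n)))"

definition Zpf :: "complex \<Rightarrow> complex \<Rightarrow> (nat \<Rightarrow> complex) \<Rightarrow> nat \<Rightarrow> (nat \<Rightarrow> complex) \<Rightarrow> complex" where
  "Zpf \<gamma> h \<mu> L lam = Bprod \<gamma> h \<mu> L lam L (replicate L True) (replicate L False)"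

end

theory Submission
  imports Defs
begin

text \<open>Let \<open>V\<^sub>a\<close>, \<open>V\<^sub>b\<close> be two copies of \<open>V\<^sub>0\<close> and let
  \<open>\<Omega>(\<lambda>\<^sub>1,\<lambda>\<^sub>2) = T\<^sub>a(\<lambda>\<^sub>1) R\<^sub>a\<^sub>b(\<lambda>\<^sub>1+\<lambda>\<^sub>2) T\<^sub>b(\<lambda>\<^sub>2)\<close> act on \<open>V\<^sub>a \<otimes> V\<^sub>b \<otimes> V\<^sub>Q\<close>.
  Its entry from \<open>e\<^sub>1 \<otimes> e\<^sub>1\<close> to \<open>e\<^sub>2 \<otimes> e\<^sub>2\<close> is \<open>sinh(\<lambda>\<^sub>1+\<lambda>\<^sub>2) B(\<lambda>\<^sub>1) B(\<lambda>\<^sub>2)\<close>.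
  The Yang-Baxter equation and the commutation of operators on different spaces rearrange \<open>\<Omega>\<close>
  as \<open>tau_a tau_b K_a R_ab K_b taubar_a taubar_b\<close>, and for \<open>\<lambda>\<^sub>1 = \<mu>\<^sub>1 - \<gamma>\<close> the rightmost
  factors of \<open>tau_a tau_b\<close> are \<open>R\<^sub>a\<^sub>1(-\<gamma>) R\<^sub>b\<^sub>1(\<lambda>\<^sub>2 - \<mu>\<^sub>1)\<close>, acting on the first quantum site.
  If \<open>\<lambda>\<^sub>2 = \<mu>\<^sub>1\<close>, this product is \<open>R\<^sub>b\<^sub>1(0) R\<^sub>a\<^sub>b(-\<gamma>)\<close>; the rank one operator \<open>R\<^sub>a\<^sub>b(-\<gamma>)\<close>
  passes through \<open>K_a R_ab K_b\<close> (reflection equation) and \<open>taubar_a taubar_b\<close> (Yang-Baxter)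
  to the right end, where its vanishing column at \<open>e\<^sub>2 \<otimes> e\<^sub>2\<close> kills the entry.
  If \<open>\<lambda>\<^sub>2 = -\<mu>\<^sub>1 - \<gamma>\<close>, the factors of \<open>\<Omega>\<close> acting on the first quantum site multiply to zero.
  Hence \<open>B(\<lambda>\<^sub>1) B(\<lambda>\<^sub>2) = 0\<close> whenever \<open>sinh(\<lambda>\<^sub>1+\<lambda>\<^sub>2) \<noteq> 0\<close>, and in general by continuity
  in \<open>\<gamma>\<close>; every \<open>Z\<close> with these \<open>\<lambda>\<^sub>1, \<lambda>\<^sub>2\<close> contains this product.\<close>

text \<open>A \<open>site_op\<close> acts on \<open>V\<^sub>a \<otimes> V\<^sub>b \<otimes> \<complex>\<^sup>2\<close>, the last factor being one site of \<open>V\<^sub>Q\<close>.\<close>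

type_synonym site_op = "bool \<times> bool \<times> bool \<Rightarrow> bool \<times> bool \<times> bool \<Rightarrow> complex"

definition site_mult :: "site_op \<Rightarrow> site_op \<Rightarrow> site_op" where
  "site_mult F G = (\<lambda>x y. \<Sum>z\<in>UNIV. F x z * G z y)"

lemma sum_UNIV_bool: "(\<Sum>x\<in>(UNIV::bool set). f x) = f False + f True"
  by (simp add: UNIV_bool add.commute)

lemma sum_UNIV_bool3: "(\<Sum>z\<in>(UNIV :: (bool \<times> bool \<times> bool) set). f z) =
  f (False,False,False) + f (False,False,True) + f (False,True,False) + f (False,True,True) +
  f (True,False,False) + f (True,False,True) + f (True,True,False) + f (True,True,True)"
proof -
  have u: "(UNIV :: (bool \<times> bool \<times> bool) set) =
    {(False,False,False),(False,False,True),(False,True,False),(False,True,True),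
     (True,False,False),(True,False,True),(True,True,False),(True,True,True)}"
    by auto
  show ?thesis unfolding u by (simp add: algebra_simps)
qed

definition site_Ra :: "complex \<Rightarrow> complex \<Rightarrow> site_op" where
  "site_Ra \<gamma> u = (\<lambda>(a,b,x) (a',b',x'). Rmat \<gamma> u (a,x) (a',x') * (if b = b' then 1 else 0))"

definition site_Rb :: "complex \<Rightarrow> complex \<Rightarrow> site_op" where
  "site_Rb \<gamma> u = (\<lambda>(a,b,x) (a',b',x'). Rmat \<gamma> u (b,x) (b',x') * (if a = a' then 1 else 0))"

definition site_ab :: "(bool \<times> bool \<Rightarrow> bool \<times> bool \<Rightarrow> complex) \<Rightarrow> site_op" where
  "site_ab G = (\<lambda>(a,b,x) (a',b',x'). G (a,b) (a',b') * (if x = x' then 1 else 0))"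

definition Ka_ab :: "complex \<Rightarrow> complex \<Rightarrow> bool \<times> bool \<Rightarrow> bool \<times> bool \<Rightarrow> complex" where
  "Ka_ab h l p q = (if p = q then (if fst p then sinh (h - l) else sinh (h + l)) else 0)"

definition Kb_ab :: "complex \<Rightarrow> complex \<Rightarrow> bool \<times> bool \<Rightarrow> bool \<times> bool \<Rightarrow> complex" where
  "Kb_ab h l p q = (if p = q then (if snd p then sinh (h - l) else sinh (h + l)) else 0)"

lemma site_Ra_apply [simp]:
  "site_Ra \<gamma> u (a,b,x) (a',b',x') = Rmat \<gamma> u (a,x) (a',x') * (if b = b' then 1 else 0)"
  by (simp add: site_Ra_def)

lemma site_Rb_apply [simp]:
  "site_Rb \<gamma> u (a,b,x) (a',b',x') = Rmat \<gamma> u (b,x) (b',x') * (if a = a' then 1 else 0)"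
  by (simp add: site_Rb_def)

lemma site_ab_apply [simp]:
  "site_ab G (a,b,x) (a',b',x') = G (a,b) (a',b') * (if x = x' then 1 else 0)"
  by (simp add: site_ab_def)

lemma site_mult_Ra: "site_mult (site_Ra \<gamma> u) G (a,b,x) y =
   (if a = x then sinh (u+\<gamma>) * G (a,b,x) y else sinh u * G (a,b,x) y + sinh \<gamma> * G (x,b,a) y)"
  by (cases a; cases b; cases x) (simp_all add: site_mult_def sum_UNIV_bool3 Rmat_def)

lemma site_mult_Rb: "site_mult (site_Rb \<gamma> u) G (a,b,x) y =
   (if b = x then sinh (u+\<gamma>) * G (a,b,x) y else sinh u * G (a,b,x) y + sinh \<gamma> * G (a,x,b) y)"
  by (cases a; cases b; cases x) (simp_all add: site_mult_def sum_UNIV_bool3 Rmat_def)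

lemma site_mult_R_ab: "site_mult (site_ab (Rmat \<gamma> u)) G (a,b,x) y =
   (if a = b then sinh (u+\<gamma>) * G (a,b,x) y else sinh u * G (a,b,x) y + sinh \<gamma> * G (b,a,x) y)"
  by (cases a; cases b; cases x) (simp_all add: site_mult_def sum_UNIV_bool3 Rmat_def)

lemma site_mult_Ka: "site_mult (site_ab (Ka_ab h l)) G (a,b,x) y =
   (if a then sinh (h-l) else sinh (h+l)) * G (a,b,x) y"
  by (cases a; cases b; cases x) (simp_all add: site_mult_def sum_UNIV_bool3 Ka_ab_def)

lemma site_mult_Kb: "site_mult (site_ab (Kb_ab h l)) G (a,b,x) y =
   (if b then sinh (h-l) else sinh (h+l)) * G (a,b,x) y"
  by (cases a; cases b; cases x) (simp_all add: site_mult_def sum_UNIV_bool3 Kb_ab_def)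

lemmas site_mult_simps = site_mult_Ra site_mult_Rb site_mult_R_ab site_mult_Ka site_mult_Kb
  Rmat_def Ka_ab_def Kb_ab_def

lemma site_op_eqI:
  assumes "\<And>a b x a' b' x'. F (a,b,x) (a',b',x') = G (a,b,x) (a',b',x')"
  shows "F = G"
  using assms by (intro ext) auto

lemma exp_double: "exp (z * 2) = exp z * exp (z::complex)" "exp (2 * z) = exp z * exp (z::complex)"
  by (simp_all only: mult_2 mult_2_right exp_add)

lemma site_yang_baxter:
  "site_mult (site_Ra \<gamma> x) (site_mult (site_ab (Rmat \<gamma> (x+y))) (site_Rb \<gamma> y)) =
   site_mult (site_Rb \<gamma> y) (site_mult (site_ab (Rmat \<gamma> (x+y))) (site_Ra \<gamma> x))"
  apply (rule site_op_eqI)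
  subgoal for a b c a' b' c'
    by (cases a; cases b; cases c; cases a'; cases b'; cases c')
      (simp_all add: site_mult_simps, (simp_all only: sinh_field_def exp_minus exp_add)?,
       (simp_all add: field_simps)?)
  done

lemma site_yang_baxter_antisym:
  "site_mult (site_ab (Rmat \<gamma> (-\<gamma>))) (site_mult (site_Ra \<gamma> x) (site_Rb \<gamma> (x+\<gamma>))) =
   site_mult (site_Rb \<gamma> (x+\<gamma>)) (site_mult (site_Ra \<gamma> x) (site_ab (Rmat \<gamma> (-\<gamma>))))"
  apply (rule site_op_eqI)
  subgoal for a b c a' b' c'
    by (cases a; cases b; cases c; cases a'; cases b'; cases c')
      (simp_all add: site_mult_simps,
       (simp_all only: sinh_field_def exp_minus exp_add exp_diff exp_double)?,
       (simp_all add: field_simps)?)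
  done

lemma site_Ka_Rb_commute:
  "site_mult (site_ab (Ka_ab h l)) (site_Rb \<gamma> y) = site_mult (site_Rb \<gamma> y) (site_ab (Ka_ab h l))"
  apply (rule site_op_eqI)
  subgoal for a b c a' b' c'
    by (cases a; cases b; cases c; cases a'; cases b'; cases c') (simp_all add: site_mult_simps)
  done

lemma site_Kb_Ra_commute:
  "site_mult (site_ab (Kb_ab h l)) (site_Ra \<gamma> y) = site_mult (site_Ra \<gamma> y) (site_ab (Kb_ab h l))"
  apply (rule site_op_eqI)
  subgoal for a b c a' b' c'
    by (cases a; cases b; cases c; cases a'; cases b'; cases c') (simp_all add: site_mult_simps)
  done

lemma site_Ra_Rb_fusion:
  "site_mult (site_Ra \<gamma> (-\<gamma>)) (site_Rb \<gamma> 0) = site_mult (site_Rb \<gamma> 0) (site_ab (Rmat \<gamma> (-\<gamma>)))"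
  apply (rule site_op_eqI)
  subgoal for a b c a' b' c'
    by (cases a; cases b; cases c; cases a'; cases b'; cases c')
      (simp_all add: site_mult_simps, (simp_all only: sinh_field_def exp_minus exp_add)?,
       (simp_all add: field_simps)?)
  done

lemma site_reflection_antisym:
  assumes "l2 = l1 + \<gamma>"
  shows "site_mult (site_ab (Rmat \<gamma> (-\<gamma>))) (site_mult (site_ab (Ka_ab h l1))
           (site_mult (site_ab (Rmat \<gamma> (l1+l2))) (site_ab (Kb_ab h l2)))) =
         site_mult (site_ab (Kb_ab h l2)) (site_mult (site_ab (Rmat \<gamma> (l1+l2)))
           (site_mult (site_ab (Ka_ab h l1)) (site_ab (Rmat \<gamma> (-\<gamma>)))))"
proof (rule site_op_eqI)
  have e2: "exp l2 = exp l1 * exp \<gamma>" using assms by (simp add: exp_add)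
  fix a b c a' b' c'
  show "site_mult (site_ab (Rmat \<gamma> (-\<gamma>))) (site_mult (site_ab (Ka_ab h l1))
           (site_mult (site_ab (Rmat \<gamma> (l1+l2))) (site_ab (Kb_ab h l2)))) (a,b,c) (a',b',c') =
        site_mult (site_ab (Kb_ab h l2)) (site_mult (site_ab (Rmat \<gamma> (l1+l2)))
           (site_mult (site_ab (Ka_ab h l1)) (site_ab (Rmat \<gamma> (-\<gamma>))))) (a,b,c) (a',b',c')"
    by (cases a; cases b; cases c; cases a'; cases b'; cases c')
      (simp_all add: site_mult_simps,
       (simp_all only: sinh_field_def exp_minus exp_add exp_diff exp_double e2)?,
       (simp_all add: field_simps)?)
qed

lemma site_double_row_zero:
  assumes "l1 = m - \<gamma>" and "l2 = - m - \<gamma>"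
  shows "site_mult (site_Ra \<gamma> (l1 - m)) (site_mult (site_Rb \<gamma> (l2 - m))
           (site_mult (site_ab (Ka_ab h l1)) (site_mult (site_ab (Rmat \<gamma> (l1+l2)))
           (site_mult (site_ab (Kb_ab h l2)) (site_mult (site_Ra \<gamma> (l1 + m)) (site_Rb \<gamma> (l2 + m))))))) =
         (\<lambda>_ _. 0)"
proof (rule site_op_eqI)
  have e1: "exp l1 = exp m / exp \<gamma>" using assms by (simp add: exp_diff)
  have e2: "exp l2 = inverse (exp m * exp \<gamma>)"
    unfolding assms(2) by (simp add: exp_diff exp_minus field_simps)
  fix a b c a' b' c'
  show "site_mult (site_Ra \<gamma> (l1 - m)) (site_mult (site_Rb \<gamma> (l2 - m))
           (site_mult (site_ab (Ka_ab h l1)) (site_mult (site_ab (Rmat \<gamma> (l1+l2)))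
           (site_mult (site_ab (Kb_ab h l2)) (site_mult (site_Ra \<gamma> (l1 + m)) (site_Rb \<gamma> (l2 + m)))))))
           (a,b,c) (a',b',c') = 0"
    by (cases a; cases b; cases c; cases a'; cases b'; cases c')
      (simp_all add: site_mult_simps,
       (simp_all only: sinh_field_def exp_minus exp_add exp_diff exp_double e1 e2)?,
       (simp_all add: field_simps)?)
qed


type_synonym opabQ = "bool \<times> bool \<times> bool list \<Rightarrow> bool \<times> bool \<times> bool list \<Rightarrow> complex"

lemma if_one_zero_mult: "(if P then 1 else 0) * x = (if P then x else (0 :: 'a :: {mult_zero, monoid_mult}))"
  by simp

lemma mult_if_one_zero: "x * (if P then 1 else 0) = (if P then x else (0 :: 'a :: {mult_zero, monoid_mult}))"
  by simp

lemma finite_states: "finite (states L)"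
proof -
  have "states L = {xs. set xs \<subseteq> UNIV \<and> length xs = L}" by (auto simp: states_def)
  then show ?thesis using finite_lists_length_eq[of "UNIV :: bool set" L] by simp
qed

context
  fixes L :: nat
begin

definition states_ab :: "(bool \<times> bool \<times> bool list) set" where
  "states_ab = UNIV \<times> UNIV \<times> states L"

text \<open>Operators on \<open>V_a \<otimes> V_b \<otimes> V_Q\<close> are only meaningful on \<open>states_ab\<close>; products and all
  operators below vanish outside it, which makes \<open>op_id\<close> a unit up to \<open>opabQ_restrict\<close>.\<close>

definition opabQ_restrict :: "opabQ \<Rightarrow> opabQ" where
  "opabQ_restrict M = (\<lambda>p q. if p \<in> states_ab \<and> q \<in> states_ab then M p q else 0)"

definition opabQ_mult :: "opabQ \<Rightarrow> opabQ \<Rightarrow> opabQ" (infixl "\<odot>" 70) where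
  "M \<odot> N = (\<lambda>p q. if p \<in> states_ab \<and> q \<in> states_ab then \<Sum>r\<in>states_ab. M p r * N r q else 0)"

lemma finite_states_ab: "finite states_ab"
  by (simp add: states_ab_def finite_states)

lemma mem_states_ab [simp]: "(a,b,s) \<in> states_ab \<longleftrightarrow> s \<in> states L"
  by (simp add: states_ab_def)

lemma sum_states_ab: "(\<Sum>r\<in>states_ab. f r) = (\<Sum>a\<in>UNIV. \<Sum>b\<in>UNIV. \<Sum>u\<in>states L. f (a,b,u))"
  by (simp add: states_ab_def sum.cartesian_product)

lemma opabQ_mult_assoc: "A \<odot> B \<odot> C = A \<odot> (B \<odot> C)"
proof (intro ext)
  fix p q
  show "(A \<odot> B \<odot> C) p q = (A \<odot> (B \<odot> C)) p q"
  proof (cases "p \<in> states_ab \<and> q \<in> states_ab")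
    case True
    have "(A \<odot> B \<odot> C) p q = (\<Sum>r\<in>states_ab. (\<Sum>r'\<in>states_ab. A p r' * B r' r) * C r q)"
      using True by (simp add: opabQ_mult_def)
    also have "\<dots> = (\<Sum>r\<in>states_ab. \<Sum>r'\<in>states_ab. A p r' * B r' r * C r q)"
      by (simp add: sum_distrib_right)
    also have "\<dots> = (\<Sum>r'\<in>states_ab. \<Sum>r\<in>states_ab. A p r' * B r' r * C r q)"
      by (rule sum.swap)
    also have "\<dots> = (\<Sum>r'\<in>states_ab. A p r' * (\<Sum>r\<in>states_ab. B r' r * C r q))"
      by (simp add: sum_distrib_left mult.assoc)
    also have "\<dots> = (A \<odot> (B \<odot> C)) p q"
      using True by (simp add: opabQ_mult_def cong: sum.cong)
    finally show ?thesis .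
  next
    case False
    then show ?thesis by (auto simp: opabQ_mult_def)
  qed
qed

lemma opabQ_restrict_mult [simp]: "opabQ_restrict (A \<odot> B) = A \<odot> B"
  by (auto simp: opabQ_restrict_def opabQ_mult_def fun_eq_iff)

lemma opabQ_mult_restrict_left [simp]: "opabQ_restrict A \<odot> B = A \<odot> B"
  by (auto simp: opabQ_restrict_def opabQ_mult_def fun_eq_iff intro!: sum.cong)

lemma opabQ_mult_restrict_right [simp]: "A \<odot> opabQ_restrict B = A \<odot> B"
  by (auto simp: opabQ_restrict_def opabQ_mult_def fun_eq_iff intro!: sum.cong)

lemma opabQ_mult_id_left [simp]: "op_id \<odot> A = opabQ_restrict A"
  by (auto simp: fun_eq_iff opabQ_mult_def opabQ_restrict_def op_id_def if_one_zero_mult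
      sum.delta finite_states_ab)

lemma opabQ_mult_id_right [simp]: "A \<odot> op_id = opabQ_restrict A"
  by (auto simp: fun_eq_iff opabQ_mult_def opabQ_restrict_def op_id_def mult_if_one_zero
      sum.delta' finite_states_ab)

lemma opabQ_mult_zero_left: "(\<lambda>_ _. 0) \<odot> A = (\<lambda>_ _. 0)"
  by (simp add: opabQ_mult_def fun_eq_iff)

lemma opabQ_mult_zero_right: "A \<odot> (\<lambda>_ _. 0) = (\<lambda>_ _. 0)"
  by (simp add: opabQ_mult_def fun_eq_iff)

lemma opabQ_mult_apply:
  "p \<in> states_ab \<Longrightarrow> q \<in> states_ab \<Longrightarrow> (A \<odot> B) p q = (\<Sum>r\<in>states_ab. A p r * B r q)"
  by (simp add: opabQ_mult_def)

lemma opabQ_mult_column_zero: "(\<And>r. B r q = 0) \<Longrightarrow> (A \<odot> B) p q = 0"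
  by (simp add: opabQ_mult_def)

definition commute :: "opabQ \<Rightarrow> opabQ \<Rightarrow> bool" where
  "commute X Y \<longleftrightarrow> X \<odot> Y = Y \<odot> X"

lemma commute_sym: "commute X Y \<Longrightarrow> commute Y X"
  by (simp add: commute_def)

lemma commute_mult: "commute X A \<Longrightarrow> commute X B \<Longrightarrow> commute X (A \<odot> B)"
  unfolding commute_def by (metis opabQ_mult_assoc)

lemma commute_id: "commute X (opabQ_restrict op_id)"
  by (simp add: commute_def)

subsection \<open>Operators acting on one site of the quantum space\<close>

definition agree_except :: "nat \<Rightarrow> bool list \<Rightarrow> bool list \<Rightarrow> bool" where
  "agree_except m s t \<longleftrightarrow> (\<forall>k<L. k \<noteq> m \<longrightarrow> s ! k = t ! k)"

text \<open>\<open>at_site m F\<close> lets \<open>F\<close> act on \<open>V_a \<otimes> V_b\<close> and the tensor factor \<open>m + 1\<close> of \<open>V_Q\<close>.\<close>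

definition at_site :: "nat \<Rightarrow> site_op \<Rightarrow> opabQ" where
  "at_site m F = opabQ_restrict (\<lambda>(a,b,s) (a',b',t).
     F (a,b,s!m) (a',b',t!m) * (if agree_except m s t then 1 else 0))"

lemma at_site_apply: "at_site m F (a,b,s) (a',b',t) =
   (if s \<in> states L \<and> t \<in> states L
    then F (a,b,s!m) (a',b',t!m) * (if agree_except m s t then 1 else 0) else 0)"
  by (simp add: at_site_def opabQ_restrict_def)

lemma at_site_zero: "at_site m (\<lambda>_ _. 0) = (\<lambda>_ _. 0)"
  by (simp add: at_site_def opabQ_restrict_def fun_eq_iff)

lemma sum_agree_except:
  assumes s: "s \<in> states L" and m: "m < L"
  shows "(\<Sum>u\<in>states L. if agree_except m s u then f u else 0) = (\<Sum>x\<in>UNIV. f (s[m:=x]))"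
proof -
  have "(\<Sum>u\<in>states L. if agree_except m s u then f u else 0) =
        (\<Sum>u\<in>{u\<in>states L. agree_except m s u}. f u)"
    by (simp add: sum.inter_filter[symmetric] finite_states)
  also have "{u\<in>states L. agree_except m s u} = range (\<lambda>x. s[m:=x])"
  proof (intro set_eqI iffI)
    fix u assume u: "u \<in> {u\<in>states L. agree_except m s u}"
    then have "u = s[m := u!m]" using s m
      by (intro nth_equalityI) (auto simp: states_def agree_except_def nth_list_update)
    then show "u \<in> range (\<lambda>x. s[m:=x])" by blast
  next
    fix u assume "u \<in> range (\<lambda>x. s[m:=x])"
    then show "u \<in> {u\<in>states L. agree_except m s u}" using s
      by (auto simp: states_def agree_except_def nth_list_update)
  qed
  also have "(\<Sum>u\<in>range (\<lambda>x. s[m:=x]). f u) = (\<Sum>x\<in>UNIV. f (s[m:=x]))"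
  proof (rule sum.reindex[unfolded comp_def])
    show "inj (\<lambda>x. s[m:=x])"
      using s m by (intro inj_onI) (metis nth_list_update_eq states_def mem_Collect_eq)
  qed
  finally show ?thesis .
qed

lemma agree_except_update: "m < L \<Longrightarrow> agree_except m (s[m:=x]) t = agree_except m s t"
  by (auto simp: agree_except_def nth_list_update)

lemma agree_except_update_other:
  assumes "s \<in> states L" "j < L" "j \<noteq> k"
  shows "agree_except k (s[j:=x]) t \<longleftrightarrow> x = t!j \<and> (\<forall>i<L. i \<noteq> j \<and> i \<noteq> k \<longrightarrow> s!i = t!i)"
  using assms unfolding agree_except_def states_def by (auto simp: nth_list_update)

lemma at_site_mult:
  assumes m: "m < L"
  shows "at_site m F \<odot> at_site m G = at_site m (site_mult F G)"
proof (intro ext)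
  fix p q :: "bool \<times> bool \<times> bool list"
  obtain a b s where p: "p = (a,b,s)" by (cases p) auto
  obtain a' b' t where q: "q = (a',b',t)" by (cases q) auto
  show "(at_site m F \<odot> at_site m G) p q = at_site m (site_mult F G) p q"
  proof (cases "s \<in> states L \<and> t \<in> states L")
    case False then show ?thesis by (auto simp: p q opabQ_mult_def at_site_apply)
  next
    case True
    then have s: "s \<in> states L" and t: "t \<in> states L" by auto
    have "(at_site m F \<odot> at_site m G) p q =
      (\<Sum>a''\<in>UNIV. \<Sum>b''\<in>UNIV. \<Sum>u\<in>states L.
         if agree_except m s u then F (a,b,s!m) (a'',b'',u!m) * (G (a'',b'',u!m) (a',b',t!m) *
              (if agree_except m u t then 1 else 0)) else 0)"
      using s t unfolding p q opabQ_mult_def sum_states_ab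
      by (simp, intro sum.cong refl) (auto simp: at_site_apply)
    also have "\<dots> = (\<Sum>a''\<in>UNIV. \<Sum>b''\<in>UNIV. \<Sum>x\<in>UNIV.
         F (a,b,s!m) (a'',b'',x) * (G (a'',b'',x) (a',b',t!m) *
           (if agree_except m s t then 1 else 0)))"
      using s m by (simp add: sum_agree_except[OF s m] agree_except_update[OF m], simp add: states_def)
    also have "\<dots> = at_site m (site_mult F G) p q"
      using s t by (simp add: p q at_site_apply site_mult_def sum_UNIV_bool3 sum_UNIV_bool algebra_simps)
    finally show ?thesis .
  qed
qed

lemma at_site_mult_distinct:
  assumes j: "j < L" and k: "k < L" and jk: "j \<noteq> k"
  shows "(at_site j F \<odot> at_site k G) (a,b,s) (a',b',t) =
    (if s \<in> states L \<and> t \<in> states L \<and> (\<forall>i<L. i \<noteq> j \<and> i \<noteq> k \<longrightarrow> s!i = t!i)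
     then \<Sum>a''\<in>UNIV. \<Sum>b''\<in>UNIV. F (a,b,s!j) (a'',b'',t!j) * G (a'',b'',s!k) (a',b',t!k) else 0)"
proof (cases "s \<in> states L \<and> t \<in> states L")
  case False then show ?thesis by (auto simp: opabQ_mult_def at_site_apply)
next
  case True
  then have s: "s \<in> states L" and t: "t \<in> states L" by auto
  have "(at_site j F \<odot> at_site k G) (a,b,s) (a',b',t) =
      (\<Sum>a''\<in>UNIV. \<Sum>b''\<in>UNIV. \<Sum>u\<in>states L.
         if agree_except j s u then F (a,b,s!j) (a'',b'',u!j) * (G (a'',b'',u!k) (a',b',t!k) *
              (if agree_except k u t then 1 else 0)) else 0)"
    using s t unfolding opabQ_mult_def sum_states_ab
    by (simp, intro sum.cong refl) (auto simp: at_site_apply)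
  also have "\<dots> = (\<Sum>a''\<in>UNIV. \<Sum>b''\<in>UNIV. \<Sum>x\<in>UNIV.
         F (a,b,s!j) (a'',b'',x) * (G (a'',b'',s!k) (a',b',t!k) *
            (if x = t!j \<and> (\<forall>i<L. i \<noteq> j \<and> i \<noteq> k \<longrightarrow> s!i = t!i) then 1 else 0)))"
    using s j jk
    by (simp add: sum_agree_except[OF s j] agree_except_update_other[OF s j jk], simp add: states_def)
  also have "\<dots> = (if (\<forall>i<L. i \<noteq> j \<and> i \<noteq> k \<longrightarrow> s!i = t!i)
     then \<Sum>a''\<in>UNIV. \<Sum>b''\<in>UNIV. F (a,b,s!j) (a'',b'',t!j) * G (a'',b'',s!k) (a',b',t!k) else 0)"
    by (cases "t!j") (auto simp: sum_UNIV_bool)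
  finally show ?thesis using s t by simp
qed

lemma at_site_Ra_Rb_commute:
  assumes "j < L" and "k < L" and "j \<noteq> k"
  shows "commute (at_site j (site_Ra \<gamma> x)) (at_site k (site_Rb \<gamma> y))"
  unfolding commute_def
proof (intro ext)
  fix p q :: "bool \<times> bool \<times> bool list"
  obtain a b s where p: "p = (a,b,s)" by (cases p) auto
  obtain a' b' t where q: "q = (a',b',t)" by (cases q) auto
  have e: "(\<forall>i<L. i \<noteq> k \<and> i \<noteq> j \<longrightarrow> s!i = t!i) \<longleftrightarrow> (\<forall>i<L. i \<noteq> j \<and> i \<noteq> k \<longrightarrow> s!i = t!i)"
    by auto
  show "(at_site j (site_Ra \<gamma> x) \<odot> at_site k (site_Rb \<gamma> y)) p q =
        (at_site k (site_Rb \<gamma> y) \<odot> at_site j (site_Ra \<gamma> x)) p q"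
    unfolding p q at_site_mult_distinct[OF assms] at_site_mult_distinct[OF assms(2,1) assms(3)[symmetric]] e
    by (cases "s \<in> states L \<and> t \<in> states L \<and> (\<forall>i<L. i \<noteq> j \<and> i \<noteq> k \<longrightarrow> s!i = t!i)")
      (simp_all only: if_True if_False, simp_all add: sum_UNIV_bool)
qed

lemma at_site_ab:
  assumes "m < L"
  shows "at_site m (site_ab G) =
    opabQ_restrict (\<lambda>(a,b,s) (a',b',t). G (a,b) (a',b') * (if s = t then 1 else 0))"
proof -
  have "(s!m = t!m \<and> agree_except m s t) \<longleftrightarrow> s = t" if "s \<in> states L" "t \<in> states L" for s t
    using that assms by (auto simp: agree_except_def states_def intro: nth_equalityI)
  then show ?thesis
    by (auto simp: fun_eq_iff at_site_apply opabQ_restrict_def)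
qed

lemma at_site_ab_independent: "m < L \<Longrightarrow> m' < L \<Longrightarrow> at_site m (site_ab G) = at_site m' (site_ab G)"
  by (simp add: at_site_ab)

subsection \<open>Embedding the operators on \<open>V_0 \<otimes> V_Q\<close> as operators on \<open>V_a\<close> or on \<open>V_b\<close>\<close>

definition embed_a :: "op0Q \<Rightarrow> opabQ" where
  "embed_a M = opabQ_restrict (\<lambda>(a,b,s) (a',b',t). M (a,s) (a',t) * (if b = b' then 1 else 0))"

definition embed_b :: "op0Q \<Rightarrow> opabQ" where
  "embed_b M = opabQ_restrict (\<lambda>(a,b,s) (a',b',t). M (b,s) (b',t) * (if a = a' then 1 else 0))"

lemma embed_a_apply: "embed_a M (a,b,s) (a',b',t) =
   (if s \<in> states L \<and> t \<in> states L then M (a,s) (a',t) * (if b = b' then 1 else 0) else 0)"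
  by (simp add: embed_a_def opabQ_restrict_def)

lemma embed_b_apply: "embed_b M (a,b,s) (a',b',t) =
   (if s \<in> states L \<and> t \<in> states L then M (b,s) (b',t) * (if a = a' then 1 else 0) else 0)"
  by (simp add: embed_b_def opabQ_restrict_def)

lemma sum_bool_states: "(\<Sum>r\<in>(UNIV::bool set) \<times> states L. f r) = (\<Sum>a\<in>UNIV. \<Sum>u\<in>states L. f (a,u))"
  by (simp add: sum.cartesian_product)

lemma embed_a_mult: "embed_a (op0Q_mult L M N) = embed_a M \<odot> embed_a N"
proof (intro ext)
  fix p q :: "bool \<times> bool \<times> bool list"
  obtain a b s where p: "p = (a,b,s)" by (cases p) auto
  obtain a' b' t where q: "q = (a',b',t)" by (cases q) auto
  show "embed_a (op0Q_mult L M N) p q = (embed_a M \<odot> embed_a N) p q"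
    unfolding p q opabQ_mult_def sum_states_ab op0Q_mult_def sum_bool_states
    by (auto simp: embed_a_apply sum_UNIV_bool algebra_simps sum.distrib intro!: sum.cong)
qed

lemma embed_b_mult: "embed_b (op0Q_mult L M N) = embed_b M \<odot> embed_b N"
proof (intro ext)
  fix p q :: "bool \<times> bool \<times> bool list"
  obtain a b s where p: "p = (a,b,s)" by (cases p) auto
  obtain a' b' t where q: "q = (a',b',t)" by (cases q) auto
  show "embed_b (op0Q_mult L M N) p q = (embed_b M \<odot> embed_b N) p q"
    unfolding p q opabQ_mult_def sum_states_ab op0Q_mult_def sum_bool_states
    by (auto simp: embed_b_apply sum_UNIV_bool algebra_simps sum.distrib intro!: sum.cong)
qed

lemma embed_a_id [simp]: "embed_a op_id = opabQ_restrict op_id"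
  by (auto simp: fun_eq_iff embed_a_apply opabQ_restrict_def op_id_def)

lemma embed_b_id [simp]: "embed_b op_id = opabQ_restrict op_id"
  by (auto simp: fun_eq_iff embed_b_apply opabQ_restrict_def op_id_def)

lemma embed_a_R0j: "embed_a (R0j \<gamma> L j x) = at_site (j - 1) (site_Ra \<gamma> x)"
  by (auto simp: fun_eq_iff embed_a_apply at_site_apply R0j_def agree_except_def)

lemma embed_b_R0j: "embed_b (R0j \<gamma> L j x) = at_site (j - 1) (site_Rb \<gamma> x)"
  by (auto simp: fun_eq_iff embed_b_apply at_site_apply R0j_def agree_except_def)

lemma embed_a_Kop: "m < L \<Longrightarrow> embed_a (Kop h l) = at_site m (site_ab (Ka_ab h l))"
  by (auto simp: at_site_ab fun_eq_iff embed_a_apply opabQ_restrict_def Kop_def Ka_ab_def)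

lemma embed_b_Kop: "m < L \<Longrightarrow> embed_b (Kop h l) = at_site m (site_ab (Kb_ab h l))"
  by (auto simp: at_site_ab fun_eq_iff embed_b_apply opabQ_restrict_def Kop_def Kb_ab_def)

subsection \<open>The double-row monodromy\<close>

context
  fixes \<gamma> h :: complex and \<mu> :: "nat \<Rightarrow> complex"
begin

abbreviation tau_a :: "complex \<Rightarrow> nat \<Rightarrow> opabQ" where
  "tau_a l n \<equiv> embed_a (tau_upto \<gamma> \<mu> L l n)"
abbreviation taubar_a :: "complex \<Rightarrow> nat \<Rightarrow> opabQ" where
  "taubar_a l n \<equiv> embed_a (taubar_upto \<gamma> \<mu> L l n)"
abbreviation tau_b :: "complex \<Rightarrow> nat \<Rightarrow> opabQ" where
  "tau_b l n \<equiv> embed_b (tau_upto \<gamma> \<mu> L l n)"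
abbreviation taubar_b :: "complex \<Rightarrow> nat \<Rightarrow> opabQ" where
  "taubar_b l n \<equiv> embed_b (taubar_upto \<gamma> \<mu> L l n)"
abbreviation K_a :: "complex \<Rightarrow> opabQ" where
  "K_a l \<equiv> embed_a (Kop h l)"
abbreviation K_b :: "complex \<Rightarrow> opabQ" where
  "K_b l \<equiv> embed_b (Kop h l)"

lemma tau_a_Suc: "tau_a l (Suc n) = at_site n (site_Ra \<gamma> (l - \<mu> (Suc n))) \<odot> tau_a l n"
  by (simp add: embed_a_mult embed_a_R0j)

lemma taubar_a_Suc: "taubar_a l (Suc n) = taubar_a l n \<odot> at_site n (site_Ra \<gamma> (l + \<mu> (Suc n)))"
  by (simp add: embed_a_mult embed_a_R0j)

lemma tau_b_Suc: "tau_b l (Suc n) = at_site n (site_Rb \<gamma> (l - \<mu> (Suc n))) \<odot> tau_b l n"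
  by (simp add: embed_b_mult embed_b_R0j)

lemma taubar_b_Suc: "taubar_b l (Suc n) = taubar_b l n \<odot> at_site n (site_Rb \<gamma> (l + \<mu> (Suc n)))"
  by (simp add: embed_b_mult embed_b_R0j)

lemma commute_tau_a:
  "(\<And>j. j < n \<Longrightarrow> commute X (at_site j (site_Ra \<gamma> (l - \<mu> (Suc j))))) \<Longrightarrow> commute X (tau_a l n)"
proof (induction n)
  case 0 then show ?case by (simp add: commute_id)
next
  case (Suc n) then show ?case unfolding tau_a_Suc by (intro commute_mult) auto
qed

lemma commute_taubar_a:
  "(\<And>j. j < n \<Longrightarrow> commute X (at_site j (site_Ra \<gamma> (l + \<mu> (Suc j))))) \<Longrightarrow> commute X (taubar_a l n)"
proof (induction n)
  case 0 then show ?case by (simp add: commute_id)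
next
  case (Suc n) then show ?case unfolding taubar_a_Suc by (intro commute_mult) auto
qed

lemma commute_tau_b:
  "(\<And>j. j < n \<Longrightarrow> commute X (at_site j (site_Rb \<gamma> (l - \<mu> (Suc j))))) \<Longrightarrow> commute X (tau_b l n)"
proof (induction n)
  case 0 then show ?case by (simp add: commute_id)
next
  case (Suc n) then show ?case unfolding tau_b_Suc by (intro commute_mult) auto
qed

lemma commute_taubar_b:
  "(\<And>j. j < n \<Longrightarrow> commute X (at_site j (site_Rb \<gamma> (l + \<mu> (Suc j))))) \<Longrightarrow> commute X (taubar_b l n)"
proof (induction n)
  case 0 then show ?case by (simp add: commute_id)
next
  case (Suc n) then show ?case unfolding taubar_b_Suc by (intro commute_mult) auto
qed

lemma commute_Rb_tau_a: "n \<le> k \<Longrightarrow> k < L \<Longrightarrow> commute (at_site k (site_Rb \<gamma> y)) (tau_a l n)"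
  by (rule commute_tau_a, rule commute_sym, rule at_site_Ra_Rb_commute) auto

lemma commute_Rb_taubar_a: "n \<le> k \<Longrightarrow> k < L \<Longrightarrow> commute (at_site k (site_Rb \<gamma> y)) (taubar_a l n)"
  by (rule commute_taubar_a, rule commute_sym, rule at_site_Ra_Rb_commute) auto

lemma commute_Ra_tau_b: "n \<le> k \<Longrightarrow> k < L \<Longrightarrow> commute (at_site k (site_Ra \<gamma> y)) (tau_b l n)"
  by (intro commute_tau_b at_site_Ra_Rb_commute) auto

lemma commute_Ra_taubar_b: "n \<le> k \<Longrightarrow> k < L \<Longrightarrow> commute (at_site k (site_Ra \<gamma> y)) (taubar_b l n)"
  by (intro commute_taubar_b at_site_Ra_Rb_commute) auto

lemma commute_K_a_Rb: "j < L \<Longrightarrow> commute (K_a l') (at_site j (site_Rb \<gamma> y))"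
  by (simp add: commute_def embed_a_Kop[of j] at_site_mult site_Ka_Rb_commute)

lemma commute_K_b_Ra: "j < L \<Longrightarrow> commute (K_b l') (at_site j (site_Ra \<gamma> y))"
  by (simp add: commute_def embed_b_Kop[of j] at_site_mult site_Kb_Ra_commute)

lemma commute_K_a_tau_b: "n \<le> L \<Longrightarrow> commute (K_a l') (tau_b l n)"
  by (intro commute_tau_b commute_K_a_Rb) auto

lemma commute_K_b_taubar_a: "n \<le> L \<Longrightarrow> commute (K_b l') (taubar_a l n)"
  by (intro commute_taubar_a commute_K_b_Ra) auto

definition R_ab :: "complex \<Rightarrow> opabQ" where
  "R_ab u = at_site 0 (site_ab (Rmat \<gamma> u))"

lemma R_ab_at_site: "m < L \<Longrightarrow> R_ab u = at_site m (site_ab (Rmat \<gamma> u))"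
  unfolding R_ab_def by (rule at_site_ab_independent) auto

lemma R_ab_apply: "0 < L \<Longrightarrow> R_ab v (a,b,x) (a',b',y) =
   (if x \<in> states L \<and> y \<in> states L then Rmat \<gamma> v (a,b) (a',b') * (if x = y then 1 else 0) else 0)"
  by (simp add: R_ab_def at_site_ab opabQ_restrict_def)

lemma taubar_a_R_ab_tau_b_exchange:
  assumes "n \<le> L"
  shows "taubar_a l1 n \<odot> R_ab (l1+l2) \<odot> tau_b l2 n = tau_b l2 n \<odot> R_ab (l1+l2) \<odot> taubar_a l1 n"
  using assms
proof (induction n)
  case 0 then show ?case by (simp add: R_ab_def)
next
  case (Suc n)
  have nL: "n < L" using Suc.prems by simp
  define Ra where "Ra = at_site n (site_Ra \<gamma> (l1 + \<mu> (Suc n)))"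
  define Rb where "Rb = at_site n (site_Rb \<gamma> (l2 - \<mu> (Suc n)))"
  define R where "R = R_ab (l1+l2)"
  define A where "A = taubar_a l1 n"
  define B where "B = tau_b l2 n"
  have e: "l1 + \<mu> (Suc n) + (l2 - \<mu> (Suc n)) = l1 + l2" by simp
  have ybe: "Ra \<odot> (R \<odot> Rb) = Rb \<odot> (R \<odot> Ra)"
    unfolding Ra_def Rb_def R_def R_ab_at_site[OF nL] at_site_mult[OF nL]
    using site_yang_baxter[of \<gamma> "l1 + \<mu> (Suc n)" "l2 - \<mu> (Suc n)"] unfolding e by simp
  have c1: "A \<odot> Rb = Rb \<odot> A"
    using commute_Rb_taubar_a[of n n] nL unfolding commute_def A_def Rb_def by simp
  have c2: "Ra \<odot> B = B \<odot> Ra"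
    using commute_Ra_tau_b[of n n] nL unfolding commute_def B_def Ra_def by simp
  have IH: "A \<odot> R \<odot> B = B \<odot> R \<odot> A"
    using Suc unfolding A_def B_def R_def by simp
  have "taubar_a l1 (Suc n) \<odot> R \<odot> tau_b l2 (Suc n) = A \<odot> Ra \<odot> R \<odot> (Rb \<odot> B)"
    unfolding taubar_a_Suc tau_b_Suc A_def B_def Ra_def Rb_def by simp
  also have "\<dots> = A \<odot> (Ra \<odot> (R \<odot> Rb) \<odot> B)" by (simp only: opabQ_mult_assoc)
  also have "\<dots> = A \<odot> (Rb \<odot> (R \<odot> Ra) \<odot> B)" by (simp only: ybe)
  also have "\<dots> = A \<odot> Rb \<odot> (R \<odot> (Ra \<odot> B))" by (simp only: opabQ_mult_assoc)
  also have "\<dots> = Rb \<odot> A \<odot> (R \<odot> (B \<odot> Ra))" by (simp only: c1 c2)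
  also have "\<dots> = Rb \<odot> (A \<odot> R \<odot> B) \<odot> Ra" by (simp only: opabQ_mult_assoc)
  also have "\<dots> = Rb \<odot> (B \<odot> R \<odot> A) \<odot> Ra" by (simp only: IH)
  also have "\<dots> = Rb \<odot> B \<odot> R \<odot> (A \<odot> Ra)" by (simp only: opabQ_mult_assoc)
  also have "\<dots> = tau_b l2 (Suc n) \<odot> R \<odot> taubar_a l1 (Suc n)"
    unfolding taubar_a_Suc tau_b_Suc A_def B_def Ra_def Rb_def by simp
  finally show ?case unfolding R_def .
qed

lemma R_ab_antisym_taubar_exchange:
  assumes "n \<le> L" and l2: "l2 = l1 + \<gamma>"
  shows "R_ab (-\<gamma>) \<odot> (taubar_a l1 n \<odot> taubar_b l2 n) = taubar_b l2 n \<odot> (taubar_a l1 n \<odot> R_ab (-\<gamma>))"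
  using assms(1)
proof (induction n)
  case 0 then show ?case by (simp add: R_ab_def)
next
  case (Suc n)
  have nL: "n < L" using Suc.prems by simp
  define Ra where "Ra = at_site n (site_Ra \<gamma> (l1 + \<mu> (Suc n)))"
  define Rb where "Rb = at_site n (site_Rb \<gamma> (l2 + \<mu> (Suc n)))"
  define R where "R = R_ab (-\<gamma>)"
  define A where "A = taubar_a l1 n"
  define B where "B = taubar_b l2 n"
  have e: "l2 + \<mu> (Suc n) = (l1 + \<mu> (Suc n)) + \<gamma>" using l2 by simp
  have ybe: "R \<odot> (Ra \<odot> Rb) = Rb \<odot> (Ra \<odot> R)"
    unfolding Ra_def Rb_def R_def R_ab_at_site[OF nL] at_site_mult[OF nL] e
    using site_yang_baxter_antisym[of \<gamma> "l1 + \<mu> (Suc n)"] by simp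
  have c1: "Ra \<odot> B = B \<odot> Ra"
    using commute_Ra_taubar_b[of n n] nL unfolding commute_def B_def Ra_def by simp
  have c2: "A \<odot> Rb = Rb \<odot> A"
    using commute_Rb_taubar_a[of n n] nL unfolding commute_def A_def Rb_def by simp
  have IH: "R \<odot> (A \<odot> B) = B \<odot> (A \<odot> R)"
    using Suc unfolding A_def B_def R_def by simp
  have "R \<odot> (taubar_a l1 (Suc n) \<odot> taubar_b l2 (Suc n)) = R \<odot> (A \<odot> Ra \<odot> (B \<odot> Rb))"
    unfolding taubar_a_Suc taubar_b_Suc A_def B_def Ra_def Rb_def ..
  also have "\<dots> = R \<odot> (A \<odot> (Ra \<odot> B \<odot> Rb))" by (simp only: opabQ_mult_assoc)
  also have "\<dots> = R \<odot> (A \<odot> (B \<odot> Ra \<odot> Rb))" by (simp only: c1)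
  also have "\<dots> = R \<odot> (A \<odot> B) \<odot> (Ra \<odot> Rb)" by (simp only: opabQ_mult_assoc)
  also have "\<dots> = B \<odot> (A \<odot> R) \<odot> (Ra \<odot> Rb)" by (simp only: IH)
  also have "\<dots> = B \<odot> (A \<odot> (R \<odot> (Ra \<odot> Rb)))" by (simp only: opabQ_mult_assoc)
  also have "\<dots> = B \<odot> (A \<odot> (Rb \<odot> (Ra \<odot> R)))" by (simp only: ybe)
  also have "\<dots> = B \<odot> (A \<odot> Rb \<odot> (Ra \<odot> R))" by (simp only: opabQ_mult_assoc)
  also have "\<dots> = B \<odot> (Rb \<odot> A \<odot> (Ra \<odot> R))" by (simp only: c2)
  also have "\<dots> = B \<odot> Rb \<odot> (A \<odot> Ra \<odot> R)" by (simp only: opabQ_mult_assoc)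
  also have "\<dots> = taubar_b l2 (Suc n) \<odot> (taubar_a l1 (Suc n) \<odot> R)"
    unfolding taubar_a_Suc taubar_b_Suc A_def B_def Ra_def Rb_def ..
  finally show ?case unfolding R_def .
qed

lemma tau_a_tau_b_first_site:
  assumes "1 \<le> n" "n \<le> L"
  shows "\<exists>Y. tau_a l1 n \<odot> tau_b l2 n =
           Y \<odot> (at_site 0 (site_Ra \<gamma> (l1 - \<mu> 1)) \<odot> at_site 0 (site_Rb \<gamma> (l2 - \<mu> 1)))"
  using assms
proof (induction n rule: dec_induct)
  case base
  show ?case
    by (rule exI[of _ "opabQ_restrict op_id"]) (simp add: tau_a_Suc tau_b_Suc del: tau_upto.simps(2))
next
  case (step n)
  then obtain Y where Y: "tau_a l1 n \<odot> tau_b l2 n =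
           Y \<odot> (at_site 0 (site_Ra \<gamma> (l1 - \<mu> 1)) \<odot> at_site 0 (site_Rb \<gamma> (l2 - \<mu> 1)))"
    by auto
  define Ra where "Ra = at_site n (site_Ra \<gamma> (l1 - \<mu> (Suc n)))"
  define Rb where "Rb = at_site n (site_Rb \<gamma> (l2 - \<mu> (Suc n)))"
  have c: "tau_a l1 n \<odot> Rb = Rb \<odot> tau_a l1 n"
    using commute_Rb_tau_a[of n n] step unfolding commute_def Rb_def by simp
  have "tau_a l1 (Suc n) \<odot> tau_b l2 (Suc n) = Ra \<odot> tau_a l1 n \<odot> (Rb \<odot> tau_b l2 n)"
    unfolding tau_a_Suc tau_b_Suc Ra_def Rb_def ..
  also have "\<dots> = Ra \<odot> (tau_a l1 n \<odot> Rb \<odot> tau_b l2 n)" by (simp only: opabQ_mult_assoc)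
  also have "\<dots> = Ra \<odot> (Rb \<odot> tau_a l1 n \<odot> tau_b l2 n)" by (simp only: c)
  also have "\<dots> = Ra \<odot> Rb \<odot> Y \<odot> (at_site 0 (site_Ra \<gamma> (l1 - \<mu> 1)) \<odot> at_site 0 (site_Rb \<gamma> (l2 - \<mu> 1)))"
    by (simp only: opabQ_mult_assoc Y)
  finally show ?case by blast
qed

lemma taubar_a_taubar_b_first_site:
  assumes "1 \<le> n" "n \<le> L"
  shows "\<exists>Y. taubar_a l1 n \<odot> taubar_b l2 n =
           at_site 0 (site_Ra \<gamma> (l1 + \<mu> 1)) \<odot> at_site 0 (site_Rb \<gamma> (l2 + \<mu> 1)) \<odot> Y"
  using assms
proof (induction n rule: dec_induct)
  case base
  show ?case
    by (rule exI[of _ "opabQ_restrict op_id"]) (simp add: taubar_a_Suc taubar_b_Suc del: taubar_upto.simps(2))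
next
  case (step n)
  then obtain Y where Y: "taubar_a l1 n \<odot> taubar_b l2 n =
           at_site 0 (site_Ra \<gamma> (l1 + \<mu> 1)) \<odot> at_site 0 (site_Rb \<gamma> (l2 + \<mu> 1)) \<odot> Y"
    by auto
  define Ra where "Ra = at_site n (site_Ra \<gamma> (l1 + \<mu> (Suc n)))"
  define Rb where "Rb = at_site n (site_Rb \<gamma> (l2 + \<mu> (Suc n)))"
  have c: "Ra \<odot> taubar_b l2 n = taubar_b l2 n \<odot> Ra"
    using commute_Ra_taubar_b[of n n] step unfolding commute_def Ra_def by simp
  have "taubar_a l1 (Suc n) \<odot> taubar_b l2 (Suc n) = taubar_a l1 n \<odot> Ra \<odot> (taubar_b l2 n \<odot> Rb)"
    unfolding taubar_a_Suc taubar_b_Suc Ra_def Rb_def ..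
  also have "\<dots> = taubar_a l1 n \<odot> (Ra \<odot> taubar_b l2 n \<odot> Rb)" by (simp only: opabQ_mult_assoc)
  also have "\<dots> = taubar_a l1 n \<odot> (taubar_b l2 n \<odot> Ra \<odot> Rb)" by (simp only: c)
  also have "\<dots> = at_site 0 (site_Ra \<gamma> (l1 + \<mu> 1)) \<odot> at_site 0 (site_Rb \<gamma> (l2 + \<mu> 1)) \<odot> (Y \<odot> (Ra \<odot> Rb))"
    by (simp only: opabQ_mult_assoc[symmetric] Y)
  finally show ?case by blast
qed

definition double_monodromy :: "complex \<Rightarrow> complex \<Rightarrow> opabQ" where
  "double_monodromy l1 l2 = embed_a (Tmon \<gamma> h \<mu> L l1) \<odot> R_ab (l1+l2) \<odot> embed_b (Tmon \<gamma> h \<mu> L l2)"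

lemma double_monodromy_factor:
  "double_monodromy l1 l2 =
     tau_a l1 L \<odot> tau_b l2 L \<odot> (K_a l1 \<odot> (R_ab (l1+l2) \<odot> (K_b l2 \<odot> (taubar_a l1 L \<odot> taubar_b l2 L))))"
proof -
  define A where "A = tau_a l1 L"
  define B where "B = tau_b l2 L"
  define A' where "A' = taubar_a l1 L"
  define B' where "B' = taubar_b l2 L"
  define R where "R = R_ab (l1+l2)"
  define K1 where "K1 = K_a l1"
  define K2 where "K2 = K_b l2"
  have ex: "A' \<odot> R \<odot> B = B \<odot> R \<odot> A'"
    unfolding A'_def R_def B_def by (rule taubar_a_R_ab_tau_b_exchange) simp
  have c1: "K1 \<odot> B = B \<odot> K1"
    using commute_K_a_tau_b[of L] unfolding commute_def K1_def B_def by simp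
  have c2: "A' \<odot> K2 = K2 \<odot> A'"
    using commute_K_b_taubar_a[of L] unfolding commute_def K2_def A'_def by simp
  have "double_monodromy l1 l2 = A \<odot> K1 \<odot> A' \<odot> R \<odot> (B \<odot> K2 \<odot> B')"
    unfolding double_monodromy_def Tmon_def embed_a_mult embed_b_mult
      A_def B_def A'_def B'_def R_def K1_def K2_def ..
  also have "\<dots> = A \<odot> (K1 \<odot> (A' \<odot> R \<odot> B \<odot> (K2 \<odot> B')))" by (simp only: opabQ_mult_assoc)
  also have "\<dots> = A \<odot> (K1 \<odot> (B \<odot> R \<odot> A' \<odot> (K2 \<odot> B')))" by (simp only: ex)
  also have "\<dots> = A \<odot> (K1 \<odot> B \<odot> (R \<odot> (A' \<odot> K2 \<odot> B')))" by (simp only: opabQ_mult_assoc)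
  also have "\<dots> = A \<odot> (B \<odot> K1 \<odot> (R \<odot> (K2 \<odot> A' \<odot> B')))" by (simp only: c1 c2)
  also have "\<dots> = A \<odot> B \<odot> (K1 \<odot> (R \<odot> (K2 \<odot> (A' \<odot> B'))))" by (simp only: opabQ_mult_assoc)
  finally show ?thesis unfolding A_def B_def A'_def B'_def R_def K1_def K2_def .
qed

text \<open>Since \<open>sinh (-\<gamma> + \<gamma>) = 0\<close>, the column of \<open>R(-\<gamma>)\<close> at \<open>e\<^sub>2 \<otimes> e\<^sub>2\<close> vanishes.\<close>

lemma double_monodromy_column_zero:
  assumes "1 \<le> L" and la: "la = \<mu> 1 - \<gamma>" and lb: "lb = \<mu> 1"
  shows "double_monodromy la lb p (True, True, t) = 0"
proof -
  have L0: "0 < L" using assms by simp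
  obtain Y where Y: "tau_a la L \<odot> tau_b lb L =
           Y \<odot> (at_site 0 (site_Ra \<gamma> (la - \<mu> 1)) \<odot> at_site 0 (site_Rb \<gamma> (lb - \<mu> 1)))"
    using tau_a_tau_b_first_site[OF assms(1) order_refl] by blast
  define R' where "R' = R_ab (-\<gamma>)"
  define R where "R = R_ab (la+lb)"
  define K1 where "K1 = K_a la"
  define K2 where "K2 = K_b lb"
  define A' where "A' = taubar_a la L"
  define B' where "B' = taubar_b lb L"
  define Rb0 where "Rb0 = at_site 0 (site_Rb \<gamma> 0)"
  have lb': "lb = la + \<gamma>" using la lb by simp
  have fusion: "at_site 0 (site_Ra \<gamma> (la - \<mu> 1)) \<odot> at_site 0 (site_Rb \<gamma> (lb - \<mu> 1)) = Rb0 \<odot> R'"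
    unfolding Rb0_def R'_def R_ab_def at_site_mult[OF L0] using site_Ra_Rb_fusion[of \<gamma>]
    by (simp add: la lb)
  have reflection: "R' \<odot> (K1 \<odot> (R \<odot> K2)) = K2 \<odot> (R \<odot> (K1 \<odot> R'))"
    unfolding R'_def R_def K1_def K2_def R_ab_def embed_a_Kop[OF L0] embed_b_Kop[OF L0] at_site_mult[OF L0]
    using site_reflection_antisym[OF lb'] by simp
  have bar: "R' \<odot> (A' \<odot> B') = B' \<odot> (A' \<odot> R')"
    unfolding R'_def A'_def B'_def by (rule R_ab_antisym_taubar_exchange[OF order_refl lb'])
  have "double_monodromy la lb = tau_a la L \<odot> tau_b lb L \<odot> (K1 \<odot> (R \<odot> (K2 \<odot> (A' \<odot> B'))))"
    unfolding double_monodromy_factor R_def K1_def K2_def A'_def B'_def ..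
  also have "\<dots> = Y \<odot> (Rb0 \<odot> (R' \<odot> (K1 \<odot> (R \<odot> K2)) \<odot> (A' \<odot> B')))"
    by (simp only: Y fusion opabQ_mult_assoc)
  also have "\<dots> = Y \<odot> (Rb0 \<odot> (K2 \<odot> (R \<odot> (K1 \<odot> (R' \<odot> (A' \<odot> B'))))))"
    by (simp only: reflection opabQ_mult_assoc)
  also have "\<dots> = Y \<odot> (Rb0 \<odot> (K2 \<odot> (R \<odot> (K1 \<odot> (B' \<odot> A'))))) \<odot> R'"
    by (simp only: bar opabQ_mult_assoc)
  finally have "double_monodromy la lb = Y \<odot> (Rb0 \<odot> (K2 \<odot> (R \<odot> (K1 \<odot> (B' \<odot> A'))))) \<odot> R'" .
  moreover have "R' q (True, True, t) = 0" for q
    by (cases q) (auto simp: R'_def R_ab_def at_site_apply Rmat_def)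
  ultimately show ?thesis by (simp add: opabQ_mult_column_zero)
qed

lemma double_monodromy_zero:
  assumes "1 \<le> L" and la: "la = \<mu> 1 - \<gamma>" and lb: "lb = - \<mu> 1 - \<gamma>"
  shows "double_monodromy la lb = (\<lambda>_ _. 0)"
proof -
  have L0: "0 < L" using assms by simp
  define Ra where "Ra = at_site 0 (site_Ra \<gamma> (la - \<mu> 1))"
  define Rb where "Rb = at_site 0 (site_Rb \<gamma> (lb - \<mu> 1))"
  define Ra' where "Ra' = at_site 0 (site_Ra \<gamma> (la + \<mu> 1))"
  define Rb' where "Rb' = at_site 0 (site_Rb \<gamma> (lb + \<mu> 1))"
  obtain Y where Y: "tau_a la L \<odot> tau_b lb L = Y \<odot> (Ra \<odot> Rb)"
    using tau_a_tau_b_first_site[OF assms(1) order_refl] unfolding Ra_def Rb_def by blast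
  obtain Y' where Y': "taubar_a la L \<odot> taubar_b lb L = Ra' \<odot> Rb' \<odot> Y'"
    using taubar_a_taubar_b_first_site[OF assms(1) order_refl] unfolding Ra'_def Rb'_def by blast
  have site_zero: "Ra \<odot> (Rb \<odot> (K_a la \<odot> (R_ab (la+lb) \<odot> (K_b lb \<odot> (Ra' \<odot> Rb'))))) = (\<lambda>_ _. 0)"
    unfolding Ra_def Rb_def Ra'_def Rb'_def R_ab_def embed_a_Kop[OF L0] embed_b_Kop[OF L0]
      at_site_mult[OF L0] site_double_row_zero[OF la lb] at_site_zero ..
  have "double_monodromy la lb =
      tau_a la L \<odot> tau_b lb L \<odot> (K_a la \<odot> (R_ab (la+lb) \<odot> (K_b lb \<odot> (taubar_a la L \<odot> taubar_b lb L))))"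
    by (rule double_monodromy_factor)
  also have "\<dots> = Y \<odot> (Ra \<odot> (Rb \<odot> (K_a la \<odot> (R_ab (la+lb) \<odot> (K_b lb \<odot> (Ra' \<odot> Rb')))))) \<odot> Y'"
    by (simp only: Y Y' opabQ_mult_assoc)
  also have "\<dots> = (\<lambda>_ _. 0)"
    by (simp only: site_zero opabQ_mult_zero_left opabQ_mult_zero_right)
  finally show ?thesis .
qed

lemma double_monodromy_B_entry:
  assumes L: "0 < L" and s: "s \<in> states L" and t: "t \<in> states L"
  shows "double_monodromy l1 l2 (False,False,s) (True,True,t) =
         sinh (l1+l2) * opQ_mult L (Bop \<gamma> h \<mu> L l1) (Bop \<gamma> h \<mu> L l2) s t"
proof -
  define T1 where "T1 = Tmon \<gamma> h \<mu> L l1"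
  define T2 where "T2 = Tmon \<gamma> h \<mu> L l2"
  have left: "(embed_a T1 \<odot> R_ab (l1+l2)) (False,False,s) (a,b,u) =
      (\<Sum>a'\<in>UNIV. T1 (False,s) (a',u) * Rmat \<gamma> (l1+l2) (a',False) (a,b))" if u: "u \<in> states L" for a b u
  proof -
    have "(embed_a T1 \<odot> R_ab (l1+l2)) (False,False,s) (a,b,u) =
       (\<Sum>a'\<in>UNIV. \<Sum>b'\<in>UNIV. \<Sum>u'\<in>states L.
          if u' = u then T1 (False,s) (a',u') * (if False = b' then 1 else 0) * Rmat \<gamma> (l1+l2) (a',b') (a,b)
          else 0)"
      using s u L by (simp add: opabQ_mult_apply sum_states_ab, intro sum.cong refl)
        (auto simp: embed_a_apply R_ab_apply)
    then show ?thesis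
      using u by (simp add: sum.delta' finite_states sum_UNIV_bool)
  qed
  have "double_monodromy l1 l2 (False,False,s) (True,True,t) =
     (\<Sum>a\<in>UNIV. \<Sum>b\<in>UNIV. \<Sum>u\<in>states L.
        (\<Sum>a'\<in>UNIV. T1 (False,s) (a',u) * Rmat \<gamma> (l1+l2) (a',False) (a,b)) *
          (T2 (b,u) (True,t) * (if a = True then 1 else 0)))"
    using s t unfolding double_monodromy_def T1_def[symmetric] T2_def[symmetric]
    by (simp add: opabQ_mult_apply[of "(False,False,s)" "(True,True,t)"] sum_states_ab left embed_b_apply
        cong: sum.cong)
  also have "\<dots> = (\<Sum>u\<in>states L. sinh (l1+l2) * (T1 (False,s) (True,u) * T2 (False,u) (True,t)))"
    by (simp add: sum_UNIV_bool Rmat_def sum.distrib[symmetric] algebra_simps)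
  also have "\<dots> = sinh (l1+l2) * opQ_mult L (Bop \<gamma> h \<mu> L l1) (Bop \<gamma> h \<mu> L l2) s t"
    by (simp add: opQ_mult_def Bop_def T1_def T2_def sum_distrib_left)
  finally show ?thesis .
qed

lemma B_B_zero_nondegenerate:
  assumes "1 \<le> L" and "s \<in> states L" and "t \<in> states L"
    and la: "la = \<mu> 1 - \<gamma>" and lb: "lb = \<mu> 1 \<or> lb = - \<mu> 1 - \<gamma>"
    and "sinh (la + lb) \<noteq> 0"
  shows "opQ_mult L (Bop \<gamma> h \<mu> L la) (Bop \<gamma> h \<mu> L lb) s t = 0"
proof -
  have "double_monodromy la lb (False,False,s) (True,True,t) = 0"
    using lb double_monodromy_column_zero[OF assms(1) la] double_monodromy_zero[OF assms(1) la] by auto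
  then show ?thesis using double_monodromy_B_entry assms by simp
qed

end

end


subsection \<open>Continuity in the crossing parameter\<close>

lemma continuous_on_Rmat:
  assumes "continuous_on UNIV g" "continuous_on UNIV l"
  shows "continuous_on UNIV (\<lambda>x::real. Rmat (g x) (l x) p q)"
proof -
  have e: "(\<lambda>x. Rmat (g x) (l x) p q) =
    (if p = q then (if fst p = snd p then (\<lambda>x. sinh (l x + g x)) else (\<lambda>x. sinh (l x)))
     else if fst p \<noteq> snd p \<and> q = (snd p, fst p) then (\<lambda>x. sinh (g x)) else (\<lambda>x. 0))"
    by (auto simp: Rmat_def fun_eq_iff)
  show ?thesis unfolding e using assms by (auto intro!: continuous_intros)
qed

lemma continuous_on_R0j:
  assumes "continuous_on UNIV g" "continuous_on UNIV l"
  shows "continuous_on UNIV (\<lambda>x::real. R0j (g x) L j (l x) P Q)"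
  using continuous_on_Rmat[OF assms]
  by (cases P; cases Q) (auto simp: R0j_def intro!: continuous_intros)

lemma continuous_on_tau_upto:
  assumes "continuous_on UNIV g" "continuous_on UNIV l"
  shows "continuous_on UNIV (\<lambda>x::real. tau_upto (g x) \<mu> L (l x) n P Q)"
proof (induction n arbitrary: P Q)
  case 0 then show ?case by (simp add: op_id_def)
next
  case (Suc n) then show ?case
    using assms by (simp add: op0Q_mult_def) (intro continuous_intros continuous_on_R0j)
qed

lemma continuous_on_taubar_upto:
  assumes "continuous_on UNIV g" "continuous_on UNIV l"
  shows "continuous_on UNIV (\<lambda>x::real. taubar_upto (g x) \<mu> L (l x) n P Q)"
proof (induction n arbitrary: P Q)
  case 0 then show ?case by (simp add: op_id_def)
next
  case (Suc n) then show ?case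
    using assms by (simp add: op0Q_mult_def) (intro continuous_intros continuous_on_R0j)
qed

lemma continuous_on_Kop:
  assumes "continuous_on UNIV l"
  shows "continuous_on UNIV (\<lambda>x::real. Kop h (l x) P Q)"
proof -
  obtain a s b t where "P = (a,s)" "Q = (b,t)" by (cases P; cases Q)
  then show ?thesis unfolding Kop_def using assms
    by (cases "a = b \<and> s = t"; cases a) (auto intro!: continuous_intros)
qed

lemma continuous_on_B_B:
  assumes "continuous_on UNIV g" "continuous_on UNIV l1" "continuous_on UNIV l2"
  shows "continuous_on UNIV
    (\<lambda>x::real. opQ_mult L (Bop (g x) h \<mu> L (l1 x)) (Bop (g x) h \<mu> L (l2 x)) s t)"
  unfolding opQ_mult_def Bop_def Tmon_def op0Q_mult_def
  by (intro continuous_intros continuous_on_tau_upto continuous_on_taubar_upto continuous_on_Kop assms)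

text \<open>The zeros of \<open>sinh\<close> lie on the imaginary axis.\<close>

lemma sinh_add_real_nonzero:
  fixes w :: complex and x :: real
  assumes "sinh w = 0" "x \<noteq> 0"
  shows "sinh (w + of_real x) \<noteq> 0"
proof
  assume "sinh (w + of_real x) = 0"
  then have "exp (w + of_real x) \<in> {1, -1}" by (simp add: sinh_zero_iff)
  then have "cmod (exp (w + of_real x)) = 1" by (auto simp del: norm_exp_eq_Re)
  then have "Re w + x = 0" by (simp add: norm_exp_eq_Re)
  moreover have "exp w \<in> {1, -1}" using assms(1) by (simp add: sinh_zero_iff)
  then have "cmod (exp w) = 1" by (auto simp del: norm_exp_eq_Re)
  then have "Re w = 0" by (simp add: norm_exp_eq_Re)
  ultimately show False using assms(2) by simp
qed

lemma continuous_zero_off_zero: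
  fixes G :: "real \<Rightarrow> complex"
  assumes "continuous_on UNIV G" and "\<And>x. x \<noteq> 0 \<Longrightarrow> G x = 0"
  shows "G 0 = 0"
proof -
  have "(G \<longlongrightarrow> G 0) (at 0)"
    using assms(1) by (simp add: continuous_on_def)
  moreover have "(G \<longlongrightarrow> 0) (at 0)"
    using assms(2) by (intro tendsto_eventually) (auto simp: eventually_at_filter)
  ultimately show ?thesis by (rule tendsto_unique[rotated]) simp
qed

text \<open>If \<open>sinh (\<lambda>\<^sub>1 + \<lambda>\<^sub>2) = 0\<close>, shifting \<open>\<gamma>\<close> by any nonzero real amount (and \<open>\<lambda>\<^sub>2\<close> along with it
  in the second case) makes it nonzero.\<close>

lemma B_B_zero:
  assumes "1 \<le> L" and "s \<in> states L" and "t \<in> states L"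
    and lb: "lb = \<mu> 1 \<or> lb = - \<mu> 1 - \<gamma>"
  shows "opQ_mult L (Bop \<gamma> h \<mu> L (\<mu> 1 - \<gamma>)) (Bop \<gamma> h \<mu> L lb) s t = 0"
proof (cases "sinh (\<mu> 1 - \<gamma> + lb) = 0")
  case False
  then show ?thesis using B_B_zero_nondegenerate assms by blast
next
  case True
  define d :: real where "d = (if lb = \<mu> 1 then 0 else 1)"
  define G where "G x = opQ_mult L (Bop (\<gamma> + of_real x) h \<mu> L (\<mu> 1 - (\<gamma> + of_real x)))
                                   (Bop (\<gamma> + of_real x) h \<mu> L (lb - of_real (d * x))) s t" for x
  have "G x = 0" if "x \<noteq> 0" for x
  proof -
    have "\<mu> 1 - (\<gamma> + of_real x) + (lb - of_real (d * x)) = \<mu> 1 - \<gamma> + lb + of_real (- (1 + d) * x)"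
      by (simp add: algebra_simps)
    moreover have "- (1 + d) * x \<noteq> 0" using that by (simp add: d_def)
    ultimately have "sinh (\<mu> 1 - (\<gamma> + of_real x) + (lb - of_real (d * x))) \<noteq> 0"
      using True sinh_add_real_nonzero by metis
    moreover have "lb - of_real (d * x) = \<mu> 1 \<or> lb - of_real (d * x) = - \<mu> 1 - (\<gamma> + of_real x)"
      using lb by (auto simp: d_def)
    ultimately show ?thesis
      unfolding G_def using B_B_zero_nondegenerate assms(1-3) by blast
  qed
  moreover have "continuous_on UNIV G"
    unfolding G_def by (intro continuous_on_B_B continuous_intros)
  ultimately have "G 0 = 0" using continuous_zero_off_zero by blast
  then show ?thesis by (simp add: G_def)
qed

lemma Bprod_zero:
  assumes "1 \<le> L" and "s \<in> states L" and "t \<in> states L" and "2 \<le> n"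
    and "lam 1 = \<mu> 1 - \<gamma>" and "lam 2 = \<mu> 1 \<or> lam 2 = - \<mu> 1 - \<gamma>"
  shows "Bprod \<gamma> h \<mu> L lam n s t = 0"
  using assms(4,3)
proof (induction n arbitrary: t rule: dec_induct)
  case base
  have "Bprod \<gamma> h \<mu> L lam 2 s t = opQ_mult L (Bop \<gamma> h \<mu> L (lam 1)) (Bop \<gamma> h \<mu> L (lam 2)) s t"
    using assms(2)
    by (simp add: numeral_2_eq_2 opQ_mult_def op_id_def if_one_zero_mult sum.delta finite_states)
  also have "\<dots> = 0"
    using B_B_zero assms base by simp
  finally show ?case .
next
  case (step n)
  then show ?case by (simp add: opQ_mult_def)
qed

theorem lemma3:
  fixes \<gamma> h :: complex and \<mu> lam :: "nat \<Rightarrow> complex" and L :: nat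
  assumes "L \<ge> 2"
    and "lam 1 = \<mu> 1 - \<gamma>"
    and "lam 2 = \<mu> 1 \<or> lam 2 = - \<mu> 1 - \<gamma>"
  shows "Zpf \<gamma> h \<mu> L lam = 0"
  unfolding Zpf_def using assms by (intro Bprod_zero) (auto simp: states_def)

end
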